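(* Let $B$ be a minimum-weight basis of the weighted uncertainty matroid $\mathcal{M}=(E,\mathcal{I},A,w)$. A set $Q\subseteq E$ is a certificate that verifies $B$ if and only if $U_e(Q)\le L_f(Q)$ for all $e\in B$ and all $f\in (E\setminus\mathrm{span}_M(B\setminus\{e\}))\setminus\{e\}$.
   Context: A weighted uncertainty matroid $\mathcal{M}=(E,\mathcal{I},A,w)$ consists of a matroid $M=(E,\mathcal{I})$ on a finite set $E$, for each $e\in E$ a non-empty finite union $A_e$ of bounded real intervals (each open or closed), and a weight $w_e\in A_e$. Let $L_e=\inf A_e$, $U_e=\sup A_e$. A minimum-weight basis is a basis of $M$ minimizing the sum of weights $w$. A weight assignment is $w^*:E\to\mathbb{R}$ with $w^*_e\in A_e$ for all $e$, consistent with $Q$ if $w^*_e=w_e$ for $e\in Q$. $Q$ verifies $B$ (is a certificate for $B$) if for every weight assignment $w^*$ consistent with $Q$, $B$ is a minimum-weight basis with respect to $w^*$. For $Q\subseteq E$: $L_e(Q)=w_e$ if $e\in Q$ and $L_e(Q)=L_e$ otherwise; $U_e(Q)=w_e$ if $e\in Q$ and $U_e(Q)=U_e$ otherwise. $\mathrm{span}_M(X)=\{e\in E: r(X\cup\{e\})=r(X)\}$ with $r$ the rank function of $M$. *)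

theory Defs
  imports Complex_Main
begin

definition matroid :: "'a set \<Rightarrow> ('a set \<Rightarrow> bool) \<Rightarrow> bool" where
  "matroid E indep \<longleftrightarrow>
     finite E \<and>
     (\<forall>X. indep X \<longrightarrow> X \<subseteq> E) \<and>
     indep {} \<and>
     (\<forall>X Y. indep X \<and> Y \<subseteq> X \<longrightarrow> indep Y) \<and>
     (\<forall>X Y. indep X \<and> indep Y \<and> card X < card Y \<longrightarrow>
        (\<exists>e\<in>Y - X. indep (insert e X)))"

definition basis :: "'a set \<Rightarrow> ('a set \<Rightarrow> bool) \<Rightarrow> 'a set \<Rightarrow> bool" where
  "basis E indep B \<longleftrightarrow> B \<subseteq> E \<and> indep B \<and>
     (\<forall>X. X \<subseteq> E \<and> indep X \<and> B \<subseteq> X \<longrightarrow> X = B)"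

definition rank :: "('a set \<Rightarrow> bool) \<Rightarrow> 'a set \<Rightarrow> nat" where
  "rank indep X = Max {card Y | Y. Y \<subseteq> X \<and> indep Y}"

definition span :: "'a set \<Rightarrow> ('a set \<Rightarrow> bool) \<Rightarrow> 'a set \<Rightarrow> 'a set" where
  "span E indep X = {e \<in> E. rank indep (insert e X) = rank indep X}"

definition min_weight_basis ::
  "'a set \<Rightarrow> ('a set \<Rightarrow> bool) \<Rightarrow> ('a \<Rightarrow> real) \<Rightarrow> 'a set \<Rightarrow> bool" where
  "min_weight_basis E indep w B \<longleftrightarrow> basis E indep B \<and>
     (\<forall>B'. basis E indep B' \<longrightarrow> (\<Sum>e\<in>B. w e) \<le> (\<Sum>e\<in>B'. w e))"

definition bounded_interval :: "real set \<Rightarrow> bool" where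
  "bounded_interval I \<longleftrightarrow> (\<exists>a b. I = {a..b} \<or> I = {a<..<b} \<or> I = {a<..b} \<or> I = {a..<b})"

definition uncertainty_area :: "real set \<Rightarrow> bool" where
  "uncertainty_area S \<longleftrightarrow> S \<noteq> {} \<and>
     (\<exists>\<F>. finite \<F> \<and> (\<forall>I\<in>\<F>. bounded_interval I) \<and> S = \<Union>\<F>)"

definition weighted_uncertainty_matroid ::
  "'a set \<Rightarrow> ('a set \<Rightarrow> bool) \<Rightarrow> ('a \<Rightarrow> real set) \<Rightarrow> ('a \<Rightarrow> real) \<Rightarrow> bool" where
  "weighted_uncertainty_matroid E indep A w \<longleftrightarrow> matroid E indep \<and>
     (\<forall>e\<in>E. uncertainty_area (A e) \<and> w e \<in> A e)"

definition lowL :: "('a \<Rightarrow> real set) \<Rightarrow> 'a \<Rightarrow> real" where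
  "lowL A e = Inf (A e)"

definition upU :: "('a \<Rightarrow> real set) \<Rightarrow> 'a \<Rightarrow> real" where
  "upU A e = Sup (A e)"

definition lowLQ :: "('a \<Rightarrow> real set) \<Rightarrow> ('a \<Rightarrow> real) \<Rightarrow> 'a set \<Rightarrow> 'a \<Rightarrow> real" where
  "lowLQ A w Q e = (if e \<in> Q then w e else lowL A e)"

definition upUQ :: "('a \<Rightarrow> real set) \<Rightarrow> ('a \<Rightarrow> real) \<Rightarrow> 'a set \<Rightarrow> 'a \<Rightarrow> real" where
  "upUQ A w Q e = (if e \<in> Q then w e else upU A e)"

definition consistent_assignment ::
  "'a set \<Rightarrow> ('a \<Rightarrow> real set) \<Rightarrow> ('a \<Rightarrow> real) \<Rightarrow> 'a set \<Rightarrow> ('a \<Rightarrow> real) \<Rightarrow> bool" where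
  "consistent_assignment E A w Q w' \<longleftrightarrow>
     (\<forall>e\<in>E. w' e \<in> A e) \<and> (\<forall>e\<in>Q. w' e = w e)"

definition verifies ::
  "'a set \<Rightarrow> ('a set \<Rightarrow> bool) \<Rightarrow> ('a \<Rightarrow> real set) \<Rightarrow> ('a \<Rightarrow> real) \<Rightarrow> 'a set \<Rightarrow> 'a set \<Rightarrow> bool" where
  "verifies E indep A w Q B \<longleftrightarrow>
     (\<forall>w'. consistent_assignment E A w Q w' \<longrightarrow> min_weight_basis E indep w' B)"

end

theory Submission
  imports Defs
begin

text \<open>
  Among all weight assignments consistent with \<open>Q\<close>, the element \<open>e\<close> can be made as heavy as
  (almost) \<open>U\<^sub>e(Q)\<close> and an element \<open>f \<noteq> e\<close> as light as (almost) \<open>L\<^sub>f(Q)\<close>, independently of each other.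
  The elements \<open>f \<noteq> e\<close> outside \<open>span(B - {e})\<close> are exactly those that can replace \<open>e\<close> in \<open>B\<close>, and a
  basis has minimum weight iff no such single exchange makes it lighter.
\<close>

lemma matroid_finite_ground: "matroid E indep \<Longrightarrow> finite E"
  by (simp add: matroid_def)

lemma matroid_indep_subset_ground: "matroid E indep \<Longrightarrow> indep X \<Longrightarrow> X \<subseteq> E"
  by (simp add: matroid_def)

lemma matroid_indep_finite: "matroid E indep \<Longrightarrow> indep X \<Longrightarrow> finite X"
  using matroid_finite_ground matroid_indep_subset_ground finite_subset by metis

lemma matroid_indep_subset: "matroid E indep \<Longrightarrow> indep X \<Longrightarrow> Y \<subseteq> X \<Longrightarrow> indep Y"
  unfolding matroid_def by blast

lemma matroid_augment:
  "matroid E indep \<Longrightarrow> indep X \<Longrightarrow> indep Y \<Longrightarrow> card X < card Y \<Longrightarrow>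
    \<exists>e\<in>Y - X. indep (insert e X)"
  unfolding matroid_def by blast

lemma basis_indep: "basis E indep B \<Longrightarrow> indep B"
  by (simp add: basis_def)

lemma basis_subset_ground: "basis E indep B \<Longrightarrow> B \<subseteq> E"
  by (simp add: basis_def)

lemma basis_maximal: "basis E indep B \<Longrightarrow> X \<subseteq> E \<Longrightarrow> indep X \<Longrightarrow> B \<subseteq> X \<Longrightarrow> X = B"
  by (simp add: basis_def)

lemma indep_card_le_basis:
  assumes M: "matroid E indep" and B: "basis E indep B" and Y: "indep Y"
  shows "card Y \<le> card B"
proof (rule ccontr)
  assume "\<not> card Y \<le> card B"
  then obtain e where e: "e \<in> Y - B" "indep (insert e B)"
    using matroid_augment[OF M basis_indep[OF B] Y] by auto
  then have "insert e B = B"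
    using basis_maximal[OF B matroid_indep_subset_ground[OF M e(2)]] by blast
  with e(1) show False by blast
qed

lemma bases_card_eq:
  "matroid E indep \<Longrightarrow> basis E indep B \<Longrightarrow> basis E indep B' \<Longrightarrow> card B = card B'"
  by (meson basis_indep indep_card_le_basis le_antisym)

lemma basis_if_indep_card_eq:
  assumes M: "matroid E indep" and B: "basis E indep B"
    and Y: "indep Y" and card_Y: "card Y = card B"
  shows "basis E indep Y"
  unfolding basis_def
proof (intro conjI allI impI)
  show "Y \<subseteq> E" using matroid_indep_subset_ground[OF M Y] .
  show "indep Y" using Y .
  fix X assume X: "X \<subseteq> E \<and> indep X \<and> Y \<subseteq> X"
  then have "card X \<le> card Y"
    using indep_card_le_basis[OF M B] card_Y by simp
  with X show "X = Y"
    using card_subset_eq[OF matroid_indep_finite[OF M], of X Y] card_mono[OF matroid_indep_finite[OF M]]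
    by (metis le_antisym)
qed

lemma basis_insert_remove:
  assumes M: "matroid E indep" and B: "basis E indep B"
    and "e \<in> B" "f \<notin> B" and indep_ef: "indep (insert f (B - {e}))"
  shows "basis E indep (insert f (B - {e}))"
proof -
  have "finite B" using matroid_indep_finite[OF M basis_indep[OF B]] .
  then have "card (insert f (B - {e})) = Suc (card (B - {e}))"
    using \<open>f \<notin> B\<close> by simp
  also have "\<dots> = card B"
    using card_Suc_Diff1[OF \<open>finite B\<close> \<open>e \<in> B\<close>] .
  finally have "card (insert f (B - {e})) = card B" .
  with basis_if_indep_card_eq[OF M B indep_ef] show ?thesis .
qed

lemma basis_exchange:
  assumes M: "matroid E indep" and B: "basis E indep B" and B': "basis E indep B'"
    and x: "x \<in> B - B'"
  obtains y where "y \<in> B' - B" "basis E indep (insert y (B - {x}))"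
proof -
  have finite_B: "finite B" using matroid_indep_finite[OF M basis_indep[OF B]] .
  have "card (B - {x}) < card B'"
    using card_Diff1_less[OF finite_B, of x] x bases_card_eq[OF M B B'] by simp
  then obtain y where y: "y \<in> B' - (B - {x})" "indep (insert y (B - {x}))"
    using matroid_augment[OF M _ basis_indep[OF B']] matroid_indep_subset[OF M basis_indep[OF B]]
    by (metis Diff_subset)
  then have "y \<in> B' - B" using x by auto
  with y(2) show ?thesis
    using that basis_insert_remove[OF M B] x by blast
qed

lemma rank_indep:
  assumes M: "matroid E indep" and I: "indep I"
  shows "rank indep I = card I"
  unfolding rank_def
proof (rule Max_eqI)
  show "finite {card Y |Y. Y \<subseteq> I \<and> indep Y}"
    using matroid_indep_finite[OF M I] by simp
  show "n \<le> card I" if "n \<in> {card Y |Y. Y \<subseteq> I \<and> indep Y}" for n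
    using that card_mono matroid_indep_finite[OF M I] by blast
  show "card I \<in> {card Y |Y. Y \<subseteq> I \<and> indep Y}"
    using I by blast
qed

lemma rank_insert_dependent:
  assumes M: "matroid E indep" and I: "indep I" and dep: "\<not> indep (insert f I)"
  shows "rank indep (insert f I) = card I"
  unfolding rank_def
proof (rule Max_eqI)
  have "{card Y |Y. Y \<subseteq> insert f I \<and> indep Y} \<subseteq> card ` Pow (insert f I)"
    by blast
  then show "finite {card Y |Y. Y \<subseteq> insert f I \<and> indep Y}"
    using matroid_indep_finite[OF M I] finite_subset by blast
  show "n \<le> card I" if n: "n \<in> {card Y |Y. Y \<subseteq> insert f I \<and> indep Y}" for n
  proof (rule ccontr)
    obtain Y where Y: "n = card Y" "Y \<subseteq> insert f I" "indep Y"
      using n by blast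
    assume "\<not> n \<le> card I"
    then obtain e where "e \<in> Y - I" "indep (insert e I)"
      using matroid_augment[OF M I Y(3)] Y(1) by auto
    with Y(2) dep show False by blast
  qed
  show "card I \<in> {card Y |Y. Y \<subseteq> insert f I \<and> indep Y}"
    using I by blast
qed

lemma not_in_span_iff_indep_insert:
  assumes M: "matroid E indep" and I: "indep I" and "f \<in> E"
  shows "f \<notin> span E indep I \<longleftrightarrow> f \<notin> I \<and> indep (insert f I)"
proof (cases "f \<notin> I \<and> indep (insert f I)")
  case True
  then have "rank indep (insert f I) = Suc (rank indep I)"
    using rank_indep[OF M] I matroid_indep_finite[OF M I] by simp
  then show ?thesis using True by (simp add: span_def)
next
  case False
  then have "rank indep (insert f I) = rank indep I"
    using rank_insert_dependent[OF M I] rank_indep[OF M I] by (auto simp: insert_absorb)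
  then show ?thesis using False \<open>f \<in> E\<close> by (simp add: span_def)
qed

lemma fundamental_cocircuit_eq:
  assumes M: "matroid E indep" and B: "basis E indep B" and "e \<in> B"
  shows "(E - span E indep (B - {e})) - {e} = {f \<in> E - B. indep (insert f (B - {e}))}"
proof -
  have "indep (B - {e})"
    using matroid_indep_subset[OF M basis_indep[OF B]] by blast
  then have "f \<notin> span E indep (B - {e}) \<longleftrightarrow> f \<notin> B - {e} \<and> indep (insert f (B - {e}))"
    if "f \<in> E" for f
    using not_in_span_iff_indep_insert[OF M _ that] by blast
  with \<open>e \<in> B\<close> show ?thesis by blast
qed

lemma min_weight_basis_exchange_le:
  assumes M: "matroid E indep" and min: "min_weight_basis E indep w B"
    and "e \<in> B" "f \<in> E - B" and indep_ef: "indep (insert f (B - {e}))"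
  shows "w e \<le> w f"
proof -
  have B: "basis E indep B" using min by (simp add: min_weight_basis_def)
  have finite_B: "finite B" using matroid_indep_finite[OF M basis_indep[OF B]] .
  have "(\<Sum>x\<in>B. w x) \<le> (\<Sum>x\<in>insert f (B - {e}). w x)"
    using min basis_insert_remove[OF M B \<open>e \<in> B\<close> _ indep_ef] \<open>f \<in> E - B\<close>
    by (simp add: min_weight_basis_def)
  also have "\<dots> = w f + (\<Sum>x\<in>B - {e}. w x)"
    using finite_B \<open>f \<in> E - B\<close> by simp
  finally show ?thesis
    using sum.remove[OF finite_B \<open>e \<in> B\<close>, of w] by simp
qed

text \<open>
  Induction on \<open>|B' - B|\<close>: exchanging the heaviest \<open>f \<in> B' - B\<close> for some \<open>e \<in> B - B'\<close> moves \<open>B'\<close>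
  towards \<open>B\<close>, and does not increase its weight because \<open>e\<close> can in turn be replaced in \<open>B\<close> by
  some element of \<open>B' - B\<close>.
\<close>

lemma min_weight_basis_if_exchange_le:
  assumes M: "matroid E indep" and B: "basis E indep B"
    and exchange_le: "\<And>e f. e \<in> B \<Longrightarrow> f \<in> E - B \<Longrightarrow> indep (insert f (B - {e})) \<Longrightarrow> w e \<le> w f"
  shows "min_weight_basis E indep w B"
proof -
  have "(\<Sum>x\<in>B. w x) \<le> (\<Sum>x\<in>B'. w x)" if "basis E indep B'" for B'
    using that
  proof (induction "card (B' - B)" arbitrary: B' rule: less_induct)
    case less
    have B': "basis E indep B'" by fact
    have finite_B': "finite B'" using matroid_indep_finite[OF M basis_indep[OF B']] .
    show ?case
    proof (cases "B' - B = {}")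
      case True
      then have "B' = B"
        using basis_maximal[OF B' basis_subset_ground[OF B] basis_indep[OF B]] by auto
      then show ?thesis by simp
    next
      case False
      have "Max (w ` (B' - B)) \<in> w ` (B' - B)"
        using False finite_B' by simp
      then obtain f where f: "f \<in> B' - B" "w f = Max (w ` (B' - B))"
        by (metis imageE)
      have f_max: "w g \<le> w f" if "g \<in> B' - B" for g
        using f(2) that finite_B' by simp
      obtain e where e: "e \<in> B - B'" and B'': "basis E indep (insert e (B' - {f}))"
        using basis_exchange[OF M B' B f(1)] by blast
      obtain g where g: "g \<in> B' - B" "basis E indep (insert g (B - {e}))"
        using basis_exchange[OF M B B' e] .
      have "w e \<le> w g"
        using exchange_le g basis_indep basis_subset_ground[OF B'] e by blast
      also have "w g \<le> w f" using f_max g(1) .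
      finally have "w e \<le> w f" .
      have "insert e (B' - {f}) - B = (B' - B) - {f}" using e by auto
      then have "card (insert e (B' - {f}) - B) < card (B' - B)"
        using card_Diff1_less[of "B' - B" f] f(1) finite_B' by simp
      then have "(\<Sum>x\<in>B. w x) \<le> (\<Sum>x\<in>insert e (B' - {f}). w x)"
        using less.hyps B'' by blast
      also have "\<dots> = w e + (\<Sum>x\<in>B' - {f}. w x)"
        using finite_B' e by simp
      also have "\<dots> \<le> (\<Sum>x\<in>B'. w x)"
        using \<open>w e \<le> w f\<close> sum.remove[OF finite_B', of f w] f(1) by simp
      finally show ?thesis .
    qed
  qed
  with B show ?thesis by (simp add: min_weight_basis_def)
qed

lemma min_weight_basis_iff_exchange_le:
  assumes M: "matroid E indep" and B: "basis E indep B"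
  shows "min_weight_basis E indep w B \<longleftrightarrow>
    (\<forall>e\<in>B. \<forall>f\<in>(E - span E indep (B - {e})) - {e}. w e \<le> w f)"
  using min_weight_basis_exchange_le[OF M] min_weight_basis_if_exchange_le[OF M B]
    fundamental_cocircuit_eq[OF M B]
  by auto

lemma uncertainty_area_bdd:
  assumes "uncertainty_area S"
  shows "bdd_above S" "bdd_below S"
proof -
  obtain \<F> where \<F>: "finite \<F>" "\<forall>I\<in>\<F>. bounded_interval I" "S = \<Union>\<F>"
    using assms unfolding uncertainty_area_def by blast
  have "bdd_above I" "bdd_below I" if "I \<in> \<F>" for I
    using \<F>(2) that unfolding bounded_interval_def by auto
  then show "bdd_above S" "bdd_below S"
    using bdd_above_UN[OF \<F>(1), of "\<lambda>I. I"] bdd_below_UN[OF \<F>(1), of "\<lambda>I. I"] \<F>(3) by auto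
qed

lemma consistent_assignment_le_upUQ:
  assumes "consistent_assignment E A w Q w'" "e \<in> E" "bdd_above (A e)"
  shows "w' e \<le> upUQ A w Q e"
  using assms cSup_upper[OF _ \<open>bdd_above (A e)\<close>]
  by (auto simp: consistent_assignment_def upUQ_def upU_def)

lemma lowLQ_le_consistent_assignment:
  assumes "consistent_assignment E A w Q w'" "e \<in> E" "bdd_below (A e)"
  shows "lowLQ A w Q e \<le> w' e"
  using assms cInf_lower[OF _ \<open>bdd_below (A e)\<close>]
  by (auto simp: consistent_assignment_def lowLQ_def lowL_def)

lemma less_upUQ_witness:
  assumes "w e \<in> A e" "bdd_above (A e)" "c < upUQ A w Q e"
  obtains a where "a \<in> A e" "c < a" "e \<in> Q \<Longrightarrow> a = w e"
proof (cases "e \<in> Q")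
  case True
  with assms that show ?thesis by (simp add: upUQ_def)
next
  case False
  with assms(3) have "c < Sup (A e)" by (simp add: upUQ_def upU_def)
  then obtain a where "a \<in> A e" "c < a"
    using less_cSup_iff[of "A e" c] assms(1,2) by blast
  with False that show ?thesis by blast
qed

lemma lowLQ_less_witness:
  assumes "w e \<in> A e" "bdd_below (A e)" "lowLQ A w Q e < c"
  obtains a where "a \<in> A e" "a < c" "e \<in> Q \<Longrightarrow> a = w e"
proof (cases "e \<in> Q")
  case True
  with assms that show ?thesis by (simp add: lowLQ_def)
next
  case False
  with assms(3) have "Inf (A e) < c" by (simp add: lowLQ_def lowL_def)
  then obtain a where "a \<in> A e" "a < c"
    using cInf_less_iff[of "A e" c] assms(1,2) by blast
  with False that show ?thesis by blast
qed

lemma consistent_assignment_reversing: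
  assumes A: "\<forall>x\<in>E. w x \<in> A x \<and> bdd_above (A x) \<and> bdd_below (A x)"
    and "e \<in> E" "f \<in> E" "e \<noteq> f" and gap: "lowLQ A w Q f < upUQ A w Q e"
  obtains w' where "consistent_assignment E A w Q w'" "w' f < w' e"
proof -
  obtain a where a: "a \<in> A e" "lowLQ A w Q f < a" "e \<in> Q \<Longrightarrow> a = w e"
    using less_upUQ_witness[OF _ _ gap] A \<open>e \<in> E\<close> by metis
  obtain b where b: "b \<in> A f" "b < a" "f \<in> Q \<Longrightarrow> b = w f"
    using lowLQ_less_witness[OF _ _ a(2)] A \<open>f \<in> E\<close> by metis
  have "consistent_assignment E A w Q (w(e := a, f := b))"
    using A a(1,3) b(1,3) unfolding consistent_assignment_def by (simp, metis)
  moreover have "(w(e := a, f := b)) f < (w(e := a, f := b)) e"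
    using b(2) \<open>e \<noteq> f\<close> by simp
  ultimately show ?thesis using that by blast
qed

theorem lemma8:
  fixes E :: "'a set" and indep :: "'a set \<Rightarrow> bool"
    and A :: "'a \<Rightarrow> real set" and w :: "'a \<Rightarrow> real"
    and B Q :: "'a set"
  assumes "weighted_uncertainty_matroid E indep A w"
    and "min_weight_basis E indep w B"
    and "Q \<subseteq> E"
  shows "verifies E indep A w Q B \<longleftrightarrow>
    (\<forall>e\<in>B. \<forall>f\<in>(E - span E indep (B - {e})) - {e}.
       upUQ A w Q e \<le> lowLQ A w Q f)"
proof -
  let ?C = "\<lambda>e. (E - span E indep (B - {e})) - {e}"
  have M: "matroid E indep" and A: "\<forall>x\<in>E. w x \<in> A x \<and> bdd_above (A x) \<and> bdd_below (A x)"
    using assms(1) uncertainty_area_bdd by (auto simp: weighted_uncertainty_matroid_def)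
  have B: "basis E indep B"
    using assms(2) by (simp add: min_weight_basis_def)
  have "verifies E indep A w Q B \<longleftrightarrow>
      (\<forall>w'. consistent_assignment E A w Q w' \<longrightarrow> (\<forall>e\<in>B. \<forall>f\<in>?C e. w' e \<le> w' f))"
    by (simp add: verifies_def min_weight_basis_iff_exchange_le[OF M B])
  also have "\<dots> \<longleftrightarrow> (\<forall>e\<in>B. \<forall>f\<in>?C e. upUQ A w Q e \<le> lowLQ A w Q f)"
  proof (intro iffI ballI allI impI)
    fix e f
    assume "\<forall>w'. consistent_assignment E A w Q w' \<longrightarrow> (\<forall>e\<in>B. \<forall>f\<in>?C e. w' e \<le> w' f)"
      and "e \<in> B" "f \<in> ?C e"
    then show "upUQ A w Q e \<le> lowLQ A w Q f"
      using consistent_assignment_reversing[OF A, of e f Q] basis_subset_ground[OF B]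
      by (metis DiffE insertCI not_le subsetD)
  next
    fix w' e f
    assume "\<forall>e\<in>B. \<forall>f\<in>?C e. upUQ A w Q e \<le> lowLQ A w Q f"
      and "consistent_assignment E A w Q w'" "e \<in> B" "f \<in> ?C e"
    then show "w' e \<le> w' f"
      using consistent_assignment_le_upUQ[of E A w Q w' e] lowLQ_le_consistent_assignment[of E A w Q w' f]
        A basis_subset_ground[OF B]
      by (meson DiffD1 order.trans subsetD)
  qed
  finally show ?thesis .
qed

end
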